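(* Every system execution $M$ (in the sense of the context) that satisfies the Lazy Set axioms A0, A1, A2 is linearizable: there is a linear ordering $<_0$ of the events of $M$ extending $<^M$ such that $<_0$ together with $\gamma^M$ satisfies FS0, FS1 and FS2.
   Context: A system execution $M$ consists of: a set of events, partitioned into low-level events (actions) and high-level events; unary predicates $\mathrm{Add},\mathrm{Rem},\mathrm{Cnt}$ on events; a binary relation $<$ (temporal precedence) on events which is a partial order such that every event has only finitely many predecessors, and moreover Lamport's finiteness property holds: for every event $x$ there is a finite set $E$ such that every event $y\notin E$ satisfies $x<y$; functions $\mathrm{Begin},\mathrm{End}$ from events to actions, with $\mathrm{Begin}(e)=\mathrm{End}(e)=e$ for every action $e$; functions $\chi$ from events to $\{0,1,f\}$, $\mathrm{val}$ from events to $\mathbb N$, and $\gamma$ from events to events. The order on all events is determined by the order on actions: for events $X,Y$ (actions or high-level), $X<Y$ iff $\mathrm{End}(X)<\mathrm{Begin}(Y)$. Notation: for $p\in\{0,1,f\}$, $\mathrm{Add}^p(a)$ abbreviates $\mathrm{Add}(a)\wedge\chi(a)=p$, and $\mathrm{Rem}^p,\mathrm{Cnt}^p$ similarly; for $p\in\{0,1\}$, $\mathrm{Op}^p(a)$ abbreviates $(\mathrm{Add}(a)\vee\mathrm{Rem}(a)\vee\mathrm{Cnt}(a))\wedge\chi(a)=p$. Lazy Set axioms: A0: $\mathrm{Add},\mathrm{Rem},\mathrm{Cnt}$ are pairwise disjoint; $\mathrm{Add}$ and $\mathrm{Rem}$ events are actions and $\mathrm{Cnt}$ events are high-level events; for every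 event $X$, $\mathrm{Begin}(X)$ and $\mathrm{End}(X)$ are actions; for $\mathrm{Cnt}$ events $E$, $\mathrm{Begin}(E)<\mathrm{End}(E)$; restricted to actions, $<$ is a linear ordering. A1: for every event $A$ with $\mathrm{Op}^1(A)$: $\mathrm{Add}^0(\gamma(A))$, $\mathrm{val}(\gamma(A))=\mathrm{val}(A)$, $\gamma(A)<\mathrm{End}(A)$, and there is no event $R$ with $\mathrm{Rem}^1(R)$, $\gamma(R)=\gamma(A)$ and $\gamma(A)<R<A$. A2: for all events $A,B$: if $\mathrm{Op}^0(B)$, $\mathrm{Add}^0(A)$, $A<B$ and $\mathrm{val}(A)=\mathrm{val}(B)$, then there is an event $R$ with $\mathrm{Rem}^1(R)$, $A=\gamma(R)$ and $R<\mathrm{End}(B)$. Linear specification (for a linear order $<_0$ and function $\gamma$): FS0: $<_0$ is a linear ordering of the events; $\mathrm{Add},\mathrm{Rem},\mathrm{Cnt}$ are pairwise disjoint; $\gamma$ is defined on the $\mathrm{Op}^1$ events and its values are $\mathrm{Add}^0$ events. FS1: for every event $a$ with $\mathrm{Op}^1(a)$: $\gamma(a)<_0 a$, $\mathrm{Add}^0(\gamma(a))$, $\mathrm{val}(a)=\mathrm{val}(\gamma(a))$, and there is no event $r$ with $\mathrm{Rem}^1(r)$, $\gamma(r)=\gamma(a)$ and $\gamma(a)<_0 r<_0 a$. FS2: for all events $a<_0b$ with $\mathrm{Add}^0(a)$ and $\mathrm{Op}^0(b)$: if $\mathrm{val}(a)=\mathrm{val}(b)$ then there is an event $r$ with $a<_0r<_0b$,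 $\mathrm{Rem}^1(r)$ and $a=\gamma(r)$. *)

theory Defs
  imports Main
begin

datatype chi_val = C0 | C1 | Cf

text \<open>A system execution M: carrier set of events, the predicate singling out the
 low-level events (actions; the others are high-level events), predicates Add, Rem, Cnt,
 the precedence relation, Begin, End, chi, val, gamma.\<close>
record 'e sysexec =
  events :: "'e set"
  action :: "'e \<Rightarrow> bool"
  isAdd  :: "'e \<Rightarrow> bool"
  isRem  :: "'e \<Rightarrow> bool"
  isCnt  :: "'e \<Rightarrow> bool"
  prec   :: "'e \<Rightarrow> 'e \<Rightarrow> bool"
  bgn    :: "'e \<Rightarrow> 'e"
  fin    :: "'e \<Rightarrow> 'e"
  chi    :: "'e \<Rightarrow> chi_val"
  val    :: "'e \<Rightarrow> nat"
  gam    :: "'e \<Rightarrow> 'e"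

definition system_execution :: "'e sysexec \<Rightarrow> bool" where
  "system_execution M \<longleftrightarrow>
     (let E = events M; lt = prec M in
      \<comment> \<open>Begin, End map events to actions, gamma maps events to events\<close>
      (\<forall>x\<in>E. bgn M x \<in> E \<and> action M (bgn M x) \<and> fin M x \<in> E \<and> action M (fin M x)
              \<and> gam M x \<in> E) \<and>
      (\<forall>x\<in>E. action M x \<longrightarrow> bgn M x = x \<and> fin M x = x) \<and>
      \<comment> \<open>< is a (strict) partial order on the events\<close>
      (\<forall>x\<in>E. \<not> lt x x) \<and>
      (\<forall>x\<in>E. \<forall>y\<in>E. \<forall>z\<in>E. lt x y \<longrightarrow> lt y z \<longrightarrow> lt x z) \<and>
      \<comment> \<open>finitely many predecessors\<close>
      (\<forall>x\<in>E. finite {y\<in>E. lt y x}) \<and>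
      \<comment> \<open>Lamport's finiteness property\<close>
      (\<forall>x\<in>E. \<exists>F. finite F \<and> (\<forall>y\<in>E. y \<notin> F \<longrightarrow> lt x y)) \<and>
      \<comment> \<open>the order on all events is determined by the order on actions\<close>
      (\<forall>X\<in>E. \<forall>Y\<in>E. lt X Y \<longleftrightarrow> lt (fin M X) (bgn M Y)))"

definition Opp :: "'e sysexec \<Rightarrow> chi_val \<Rightarrow> 'e \<Rightarrow> bool" where
  "Opp M p a \<longleftrightarrow> (isAdd M a \<or> isRem M a \<or> isCnt M a) \<and> chi M a = p"

definition Addp :: "'e sysexec \<Rightarrow> chi_val \<Rightarrow> 'e \<Rightarrow> bool" where
  "Addp M p a \<longleftrightarrow> isAdd M a \<and> chi M a = p"

definition Remp :: "'e sysexec \<Rightarrow> chi_val \<Rightarrow> 'e \<Rightarrow> bool" where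
  "Remp M p a \<longleftrightarrow> isRem M a \<and> chi M a = p"

definition A0 :: "'e sysexec \<Rightarrow> bool" where
  "A0 M \<longleftrightarrow> (let E = events M; lt = prec M in
     (\<forall>x\<in>E. \<not> (isAdd M x \<and> isRem M x) \<and> \<not> (isAdd M x \<and> isCnt M x)
             \<and> \<not> (isRem M x \<and> isCnt M x)) \<and>
     (\<forall>x\<in>E. (isAdd M x \<or> isRem M x) \<longrightarrow> action M x) \<and>
     (\<forall>x\<in>E. isCnt M x \<longrightarrow> \<not> action M x) \<and>
     (\<forall>x\<in>E. action M (bgn M x) \<and> action M (fin M x)) \<and>
     (\<forall>x\<in>E. isCnt M x \<longrightarrow> lt (bgn M x) (fin M x)) \<and>
     (\<forall>x\<in>E. \<forall>y\<in>E. action M x \<longrightarrow> action M y \<longrightarrow> x \<noteq> y \<longrightarrow> lt x y \<or> lt y x))"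

definition A1 :: "'e sysexec \<Rightarrow> bool" where
  "A1 M \<longleftrightarrow> (let E = events M; lt = prec M; g = gam M in
     \<forall>A\<in>E. Opp M C1 A \<longrightarrow>
        Addp M C0 (g A) \<and> val M (g A) = val M A \<and> lt (g A) (fin M A) \<and>
        \<not> (\<exists>R\<in>E. Remp M C1 R \<and> g R = g A \<and> lt (g A) R \<and> lt R A))"

definition A2 :: "'e sysexec \<Rightarrow> bool" where
  "A2 M \<longleftrightarrow> (let E = events M; lt = prec M; g = gam M in
     \<forall>A\<in>E. \<forall>B\<in>E. Opp M C0 B \<longrightarrow> Addp M C0 A \<longrightarrow> lt A B \<longrightarrow> val M A = val M B \<longrightarrow>
        (\<exists>R\<in>E. Remp M C1 R \<and> A = g R \<and> lt R (fin M B)))"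

definition FS0 :: "'e sysexec \<Rightarrow> ('e \<Rightarrow> 'e \<Rightarrow> bool) \<Rightarrow> bool" where
  "FS0 M lt0 \<longleftrightarrow> (let E = events M; g = gam M in
     (\<forall>x\<in>E. \<not> lt0 x x) \<and>
     (\<forall>x\<in>E. \<forall>y\<in>E. \<forall>z\<in>E. lt0 x y \<longrightarrow> lt0 y z \<longrightarrow> lt0 x z) \<and>
     (\<forall>x\<in>E. \<forall>y\<in>E. x \<noteq> y \<longrightarrow> lt0 x y \<or> lt0 y x) \<and>
     (\<forall>x\<in>E. \<not> (isAdd M x \<and> isRem M x) \<and> \<not> (isAdd M x \<and> isCnt M x)
             \<and> \<not> (isRem M x \<and> isCnt M x)) \<and>
     (\<forall>a\<in>E. Opp M C1 a \<longrightarrow> g a \<in> E \<and> Addp M C0 (g a)))"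

definition FS1 :: "'e sysexec \<Rightarrow> ('e \<Rightarrow> 'e \<Rightarrow> bool) \<Rightarrow> bool" where
  "FS1 M lt0 \<longleftrightarrow> (let E = events M; g = gam M in
     \<forall>a\<in>E. Opp M C1 a \<longrightarrow>
        lt0 (g a) a \<and> Addp M C0 (g a) \<and> val M a = val M (g a) \<and>
        \<not> (\<exists>r\<in>E. Remp M C1 r \<and> g r = g a \<and> lt0 (g a) r \<and> lt0 r a))"

definition FS2 :: "'e sysexec \<Rightarrow> ('e \<Rightarrow> 'e \<Rightarrow> bool) \<Rightarrow> bool" where
  "FS2 M lt0 \<longleftrightarrow> (let E = events M; g = gam M in
     \<forall>a\<in>E. \<forall>b\<in>E. lt0 a b \<longrightarrow> Addp M C0 a \<longrightarrow> Opp M C0 b \<longrightarrow> val M a = val M b \<longrightarrow>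
        (\<exists>r\<in>E. lt0 a r \<and> lt0 r b \<and> Remp M C1 r \<and> a = g r))"

end

theory Submission
  imports Defs
begin

text \<open>Each event is linearized at an action of its own interval [Begin, End], its anchor a,
  with key (a, 0), (a, 1) or (a, 2): just before a, at a, or just after a. Actions are their
  own anchors. A successful Cnt goes just before its Begin if the Add it reads precedes that
  Begin, and otherwise just after that Add. An unsuccessful Cnt goes just after a Rem inside
  its interval of a matching Add that precedes its Begin, and otherwise just before its
  Begin. Ordering events by key, and events with equal keys by an arbitrary tie-break,
  gives a linear order extending the precedence order, and FS1, FS2 follow from A1, A2
  because Add and Rem actions keep their mutual order.\<close>

definition strict_linear_on :: "'a set \<Rightarrow> ('a \<Rightarrow> 'a \<Rightarrow> bool) \<Rightarrow> bool" where
  "strict_linear_on A r \<longleftrightarrow> (\<forall>x\<in>A. \<not> r x x) \<and>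
     (\<forall>x\<in>A. \<forall>y\<in>A. \<forall>z\<in>A. r x y \<longrightarrow> r y z \<longrightarrow> r x z) \<and>
     (\<forall>x\<in>A. \<forall>y\<in>A. x \<noteq> y \<longrightarrow> r x y \<or> r y x)"

definition lex_less :: "('a \<Rightarrow> 'a \<Rightarrow> bool) \<Rightarrow> ('b \<Rightarrow> 'b \<Rightarrow> bool) \<Rightarrow> 'a \<times> 'b \<Rightarrow> 'a \<times> 'b \<Rightarrow> bool" where
  "lex_less r s p q \<longleftrightarrow> r (fst p) (fst q) \<or> fst p = fst q \<and> s (snd p) (snd q)"

lemma strict_linear_on_lex_less:
  assumes r: "strict_linear_on A r" and s: "strict_linear_on B s"
  shows "strict_linear_on (A \<times> B) (lex_less r s)"
  unfolding strict_linear_on_def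
proof (intro conjI ballI impI)
  show "\<not> lex_less r s p p" if "p \<in> A \<times> B" for p
    using r s that unfolding strict_linear_on_def lex_less_def by (auto simp: mem_Times_iff)
  show "lex_less r s p u" if "p \<in> A \<times> B" "q \<in> A \<times> B" "u \<in> A \<times> B"
    "lex_less r s p q" "lex_less r s q u" for p q u
    using r s that unfolding strict_linear_on_def lex_less_def mem_Times_iff by metis
  show "lex_less r s p q \<or> lex_less r s q p" if "p \<in> A \<times> B" "q \<in> A \<times> B" "p \<noteq> q" for p q
    using r s that unfolding strict_linear_on_def lex_less_def mem_Times_iff by (metis prod_eq_iff)
qed

lemma strict_linear_on_inv_image:
  assumes r: "strict_linear_on B r" and inj: "inj_on f A" and "f ` A \<subseteq> B"
  shows "strict_linear_on A (\<lambda>x y. r (f x) (f y))"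
  unfolding strict_linear_on_def
proof (intro conjI ballI impI)
  have f: "f x \<in> B" if "x \<in> A" for x using assms(3) that by blast
  show "\<not> r (f x) (f x)" if "x \<in> A" for x
    using r f[OF that] unfolding strict_linear_on_def by blast
  show "r (f x) (f z)" if "x \<in> A" "y \<in> A" "z \<in> A" "r (f x) (f y)" "r (f y) (f z)" for x y z
    using r f[OF that(1)] f[OF that(2)] f[OF that(3)] that(4,5) unfolding strict_linear_on_def by blast
  show "r (f x) (f y) \<or> r (f y) (f x)" if "x \<in> A" "y \<in> A" "x \<noteq> y" for x y
    using r f[OF that(1)] f[OF that(2)] inj_on_eq_iff[OF inj that(1,2)] that(3)
    unfolding strict_linear_on_def by blast
qed

lemma strict_linear_on_less: "strict_linear_on A ((<) :: 'a::linorder \<Rightarrow> 'a \<Rightarrow> bool)"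
  unfolding strict_linear_on_def by auto

lemma strict_linear_on_exists: "\<exists>r. strict_linear_on A r"
proof -
  obtain w where "well_order_on A w" using well_order_on by blast
  then have "trans w" "antisym w" "total_on A w"
    by (auto simp: well_order_on_def linear_order_on_def partial_order_on_def preorder_on_def)
  then have "strict_linear_on A (\<lambda>x y. (x, y) \<in> w \<and> x \<noteq> y)"
    unfolding strict_linear_on_def total_on_def
    by (intro conjI ballI impI) (auto dest: transD antisymD)
  then show ?thesis by blast
qed

locale lazy_set_execution =
  fixes M :: "'e sysexec" and tiebreak :: "'e \<Rightarrow> 'e \<Rightarrow> bool"
  assumes system_execution: "system_execution M"
    and A0: "A0 M" and A1: "A1 M" and A2: "A2 M"
    and tiebreak: "strict_linear_on (events M) tiebreak"
begin

abbreviation E where "E \<equiv> events M"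
abbreviation lt where "lt \<equiv> prec M"
abbreviation actions where "actions \<equiv> {x \<in> E. action M x}"

lemma bgn_action: "x \<in> E \<Longrightarrow> bgn M x \<in> actions"
  and fin_action: "x \<in> E \<Longrightarrow> fin M x \<in> actions"
  and gam_in_events: "x \<in> E \<Longrightarrow> gam M x \<in> E"
  and bgn_fin_of_action: "x \<in> actions \<Longrightarrow> bgn M x = x \<and> fin M x = x"
  and prec_irrefl: "x \<in> E \<Longrightarrow> \<not> lt x x"
  using system_execution unfolding system_execution_def Let_def by simp_all

lemma prec_trans: "x \<in> E \<Longrightarrow> y \<in> E \<Longrightarrow> z \<in> E \<Longrightarrow> lt x y \<Longrightarrow> lt y z \<Longrightarrow> lt x z"
  and prec_iff_fin_bgn: "x \<in> E \<Longrightarrow> y \<in> E \<Longrightarrow> lt x y \<longleftrightarrow> lt (fin M x) (bgn M y)"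
  using system_execution unfolding system_execution_def Let_def by (elim conjE; blast)+

lemma ops_disjoint:
    "x \<in> E \<Longrightarrow> \<not> (isAdd M x \<and> isRem M x) \<and> \<not> (isAdd M x \<and> isCnt M x) \<and> \<not> (isRem M x \<and> isCnt M x)"
  and add_rem_action: "x \<in> E \<Longrightarrow> isAdd M x \<or> isRem M x \<Longrightarrow> action M x"
  and prec_linear_on_actions: "x \<in> actions \<Longrightarrow> y \<in> actions \<Longrightarrow> x \<noteq> y \<Longrightarrow> lt x y \<or> lt y x"
  using A0 unfolding A0_def Let_def by (elim conjE; blast)+

lemma A1_rule:
  "A \<in> E \<Longrightarrow> Opp M C1 A \<Longrightarrow> Addp M C0 (gam M A) \<and> val M (gam M A) = val M A \<and>
     lt (gam M A) (fin M A) \<and> \<not> (\<exists>R\<in>E. Remp M C1 R \<and> gam M R = gam M A \<and> lt (gam M A) R \<and> lt R A)"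
  using A1 unfolding A1_def Let_def by blast

lemma A2_rule:
  "A \<in> E \<Longrightarrow> B \<in> E \<Longrightarrow> Opp M C0 B \<Longrightarrow> Addp M C0 A \<Longrightarrow> lt A B \<Longrightarrow> val M A = val M B \<Longrightarrow>
     \<exists>R\<in>E. Remp M C1 R \<and> A = gam M R \<and> lt R (fin M B)"
  using A2 unfolding A2_def Let_def by blast

lemma strict_linear_on_actions: "strict_linear_on actions lt"
  unfolding strict_linear_on_def
proof (intro conjI ballI impI)
  show "\<not> lt x x" if "x \<in> actions" for x using that prec_irrefl by simp
  show "lt x z" if "x \<in> actions" "y \<in> actions" "z \<in> actions" "lt x y" "lt y z" for x y z
    using that prec_trans[of x y z] by simp
  show "lt x y \<or> lt y x" if "x \<in> actions" "y \<in> actions" "x \<noteq> y" for x y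
    using that by (rule prec_linear_on_actions)
qed

lemma bgn_le_fin:
  assumes "x \<in> E"
  shows "bgn M x = fin M x \<or> lt (bgn M x) (fin M x)"
proof -
  have "\<not> lt (fin M x) (bgn M x)" using prec_iff_fin_bgn[OF assms assms] prec_irrefl[OF assms] by simp
  then show ?thesis
    using prec_linear_on_actions[OF bgn_action[OF assms] fin_action[OF assms]] by blast
qed

lemma Addp_action: "x \<in> E \<Longrightarrow> Addp M p x \<Longrightarrow> x \<in> actions"
  and Remp_action: "x \<in> E \<Longrightarrow> Remp M p x \<Longrightarrow> x \<in> actions"
  unfolding Addp_def Remp_def using add_rem_action by blast+

lemma Opp_non_action: "x \<in> E \<Longrightarrow> Opp M p x \<Longrightarrow> \<not> action M x \<Longrightarrow> isCnt M x \<and> chi M x = p"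
  unfolding Opp_def using add_rem_action by blast

lemma removed_add:
  assumes "R \<in> E" and "Remp M C1 R"
  shows "lt (gam M R) R \<and> Addp M C0 (gam M R) \<and> val M (gam M R) = val M R \<and> gam M R \<in> actions"
proof -
  have "Opp M C1 R" using assms(2) by (auto simp: Opp_def Remp_def)
  then have "Addp M C0 (gam M R) \<and> val M (gam M R) = val M R \<and> lt (gam M R) (fin M R)"
    using A1_rule[OF assms(1)] by blast
  moreover have "fin M R = R" using bgn_fin_of_action Remp_action[OF assms] by blast
  moreover have "gam M R \<in> E" using gam_in_events assms(1) by blast
  ultimately show ?thesis using Addp_action by auto
qed

lemma removal_unique:
  assumes "R \<in> E" "R' \<in> E" "Remp M C1 R" "Remp M C1 R'" "gam M R = gam M R'"
  shows "R = R'"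
proof -
  have not_before: "\<not> lt S S'"
    if "S \<in> E" "S' \<in> E" "Remp M C1 S" "Remp M C1 S'" "gam M S = gam M S'" for S S'
  proof -
    have "Opp M C1 S'" using that(4) by (auto simp: Opp_def Remp_def)
    then have "\<not> (lt (gam M S') S \<and> lt S S')" using A1_rule[OF that(2)] that(1,3,5) by blast
    then show ?thesis using removed_add[OF that(1,3)] that(5) by auto
  qed
  show ?thesis
    using not_before[OF assms] not_before[OF assms(2,1,4,3) assms(5)[symmetric]]
      prec_linear_on_actions Remp_action assms(1-4) by blast
qed

lemma earlier_add_removed:
  assumes "a \<in> E" "a' \<in> E" "Addp M C0 a" "Addp M C0 a'" "val M a = val M a'" "lt a a'"
  shows "\<exists>R\<in>E. Remp M C1 R \<and> gam M R = a \<and> lt R a'"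
proof -
  have "Opp M C0 a'" using assms(4) by (simp add: Opp_def Addp_def)
  then obtain R where "R \<in> E" "Remp M C1 R" "a = gam M R" "lt R (fin M a')"
    using A2_rule[OF assms(1,2)] assms(3,5,6) by blast
  moreover have "fin M a' = a'" using bgn_fin_of_action Addp_action[OF assms(2,4)] by blast
  ultimately show ?thesis by auto
qed

definition removal_within :: "'e \<Rightarrow> 'e \<Rightarrow> bool" where
  "removal_within x R \<longleftrightarrow> R \<in> E \<and> Remp M C1 R \<and> val M (gam M R) = val M x \<and>
     lt (gam M R) (bgn M x) \<and> \<not> lt R (bgn M x) \<and> lt R (fin M x)"

definition key :: "'e \<Rightarrow> 'e \<times> nat" where
  "key x = (if action M x then (x, 1)
     else if isCnt M x \<and> chi M x = C1 then
       (if lt (gam M x) (bgn M x) then (bgn M x, 0) else (gam M x, 2))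
     else if isCnt M x \<and> chi M x = C0 then
       (if \<exists>R. removal_within x R then (SOME R. removal_within x R, 2) else (bgn M x, 0))
     else (bgn M x, 1))"

definition lin :: "'e \<Rightarrow> 'e \<Rightarrow> bool" where
  "lin x y \<longleftrightarrow> lex_less (lex_less lt (<)) tiebreak (key x, x) (key y, y)"

lemma key_action [simp]: "action M x \<Longrightarrow> key x = (x, 1)"
  by (simp add: key_def)

lemma key_in_interval:
  assumes x: "x \<in> E"
  shows "fst (key x) \<in> actions \<and> (bgn M x = fst (key x) \<or> lt (bgn M x) (fst (key x)))
    \<and> (fst (key x) = fin M x \<or> lt (fst (key x)) (fin M x))"
proof -
  have bgn_fin: "bgn M x \<in> actions" "bgn M x = fin M x \<or> lt (bgn M x) (fin M x)"
    using bgn_action bgn_le_fin x by blast+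
  consider (action) "action M x"
    | (cnt1) "\<not> action M x" "isCnt M x \<and> chi M x = C1"
    | (cnt0) "\<not> action M x" "isCnt M x \<and> chi M x = C0" "\<exists>R. removal_within x R"
    | (other) "\<not> action M x" "\<not> (isCnt M x \<and> chi M x = C1)"
        "\<not> (isCnt M x \<and> chi M x = C0 \<and> (\<exists>R. removal_within x R))"
    by blast
  then show ?thesis
  proof cases
    case action
    then show ?thesis using x bgn_fin_of_action by simp
  next
    case cnt1
    then have "Opp M C1 x" by (simp add: Opp_def)
    then have "gam M x \<in> actions" "lt (gam M x) (fin M x)"
      using A1_rule x gam_in_events Addp_action by blast+
    then show ?thesis
      using cnt1 bgn_fin prec_linear_on_actions[of "bgn M x" "gam M x"] by (auto simp: key_def)
  next
    case cnt0
    define R where "R = (SOME R. removal_within x R)"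
    have "removal_within x R" unfolding R_def using cnt0(3) by (rule someI_ex)
    then have "R \<in> actions" "\<not> lt R (bgn M x)" "lt R (fin M x)"
      using Remp_action unfolding removal_within_def by blast+
    then show ?thesis
      using cnt0 bgn_fin prec_linear_on_actions[of "bgn M x" R] by (auto simp: key_def R_def)
  next
    case other
    then show ?thesis using bgn_fin by (auto simp: key_def)
  qed
qed

lemma strict_linear_on_lin: "strict_linear_on E lin"
proof -
  have order: "strict_linear_on ((actions \<times> UNIV) \<times> E)
      (lex_less (lex_less lt ((<) :: nat \<Rightarrow> _)) tiebreak)"
    using strict_linear_on_lex_less[OF strict_linear_on_lex_less[OF strict_linear_on_actions
        strict_linear_on_less[of UNIV]] tiebreak] .
  have image: "(\<lambda>x. (key x, x)) ` E \<subseteq> (actions \<times> UNIV) \<times> E"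
    using key_in_interval by (simp add: image_subset_iff mem_Times_iff)
  show ?thesis
    unfolding lin_def by (rule strict_linear_on_inv_image[OF order _ image]) (simp add: inj_on_def)
qed

lemma lin_iff_key_less: "key x \<noteq> key y \<Longrightarrow> lin x y \<longleftrightarrow> lex_less lt (<) (key x) (key y)"
  unfolding lin_def lex_less_def by auto

lemma lin_irrefl: "x \<in> E \<Longrightarrow> \<not> lin x x"
  using strict_linear_on_lin unfolding strict_linear_on_def by blast

lemma lin_actions_iff: "x \<in> actions \<Longrightarrow> y \<in> actions \<Longrightarrow> lin x y \<longleftrightarrow> lt x y"
  using prec_irrefl lin_irrefl by (cases "x = y") (auto simp: lin_iff_key_less lex_less_def)

lemma lin_extends_prec:
  assumes "x \<in> E" "y \<in> E" "lt x y"
  shows "lin x y"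
proof -
  have between: "lt (fin M x) (bgn M y)" using prec_iff_fin_bgn assms by blast
  have ends: "fin M x \<in> E" "bgn M y \<in> E" using fin_action bgn_action assms(1,2) by auto
  have kx: "fst (key x) \<in> E" "fst (key x) = fin M x \<or> lt (fst (key x)) (fin M x)"
    using key_in_interval[OF assms(1)] by auto
  have ky: "fst (key y) \<in> E" "bgn M y = fst (key y) \<or> lt (bgn M y) (fst (key y))"
    using key_in_interval[OF assms(2)] by auto
  have "lt (fst (key x)) (bgn M y)"
    using kx between prec_trans[OF kx(1) ends] by auto
  then have anchors: "lt (fst (key x)) (fst (key y))"
    using ky prec_trans[OF kx(1) ends(2) ky(1)] by auto
  then have "key x \<noteq> key y" using prec_irrefl kx(1) by auto
  then show ?thesis using anchors by (simp add: lin_iff_key_less lex_less_def)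
qed

lemma lin_removed_add: "r \<in> E \<Longrightarrow> Remp M C1 r \<Longrightarrow> lin (gam M r) r"
  using removed_add Remp_action lin_actions_iff by blast

lemma lin_action_left_iff:
  assumes "r \<in> actions" and "snd (key x) \<noteq> 1"
  shows "lin r x \<longleftrightarrow> lt r (fst (key x)) \<or> r = fst (key x) \<and> 1 < snd (key x)"
proof -
  have "key r \<noteq> key x" using assms by (metis key_action mem_Collect_eq snd_conv)
  then show ?thesis using assms(1) by (simp add: lin_iff_key_less lex_less_def)
qed

lemma FS0_lin: "FS0 M lin"
  unfolding FS0_def Let_def
proof (intro conjI ballI impI)
  show "\<not> lin x x" if "x \<in> E" for x using that by (rule lin_irrefl)
  show "lin x z" if "x \<in> E" "y \<in> E" "z \<in> E" "lin x y" "lin y z" for x y z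
    using strict_linear_on_lin that unfolding strict_linear_on_def by blast
  show "lin x y \<or> lin y x" if "x \<in> E" "y \<in> E" "x \<noteq> y" for x y
    using strict_linear_on_lin that unfolding strict_linear_on_def by blast
  show "gam M a \<in> E" if "a \<in> E" for a using that by (rule gam_in_events)
  show "Addp M C0 (gam M a)" if "a \<in> E" "Opp M C1 a" for a using A1_rule that by blast
qed (use ops_disjoint in blast)+

lemma FS1_lin: "FS1 M lin"
  unfolding FS1_def Let_def
proof (intro ballI impI)
  fix a assume a: "a \<in> E" and op: "Opp M C1 a"
  define g where "g = gam M a"
  have add: "Addp M C0 g" "val M a = val M g" and g_before: "lt g (fin M a)"
    and no_removal: "\<not> (\<exists>R\<in>E. Remp M C1 R \<and> gam M R = g \<and> lt g R \<and> lt R a)"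
    using A1_rule[OF a op] unfolding g_def by auto
  have g: "g \<in> actions" using Addp_action gam_in_events a add(1) unfolding g_def by blast
  have "lin g a \<and> (\<forall>r\<in>actions. lt g r \<longrightarrow> lin r a \<longrightarrow> lt r a)"
  proof (cases "action M a")
    case True
    then show ?thesis using a g g_before bgn_fin_of_action lin_actions_iff by auto
  next
    case non_action: False
    then have cnt: "isCnt M a \<and> chi M a = C1" using Opp_non_action a op by blast
    show ?thesis
    proof (cases "lt g (bgn M a)")
      case True
      then have key: "key a = (bgn M a, 0)" using cnt non_action by (simp add: key_def g_def)
      have "lt r a" if "r \<in> actions" "lin r a" for r
        using that key lin_action_left_iff prec_iff_fin_bgn[of r a] a bgn_fin_of_action by auto
      then show ?thesis using True key g lin_action_left_iff by auto
    next
      case False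
      then have key: "key a = (g, 2)" using cnt non_action by (simp add: key_def g_def)
      have "\<not> lt g r" if "r \<in> actions" "lin r a" for r
        using that key g lin_action_left_iff prec_irrefl prec_trans[of g r g] by auto
      then show ?thesis using key g lin_action_left_iff by auto
    qed
  qed
  then show "lin (gam M a) a \<and> Addp M C0 (gam M a) \<and> val M a = val M (gam M a) \<and>
      \<not> (\<exists>r\<in>E. Remp M C1 r \<and> gam M r = gam M a \<and> lin (gam M a) r \<and> lin r a)"
    using add no_removal g Remp_action lin_actions_iff unfolding g_def by blast
qed

lemma add_before_removal_within_removed:
  assumes R: "removal_within b R" and a: "a \<in> E" "Addp M C0 a" "val M a = val M b" "lt a R"
  shows "\<exists>r\<in>E. Remp M C1 r \<and> gam M r = a \<and> (r = R \<or> lt r R)"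
proof -
  define a' where "a' = gam M R"
  have R_rem: "R \<in> E" "Remp M C1 R" and "val M a' = val M b"
    using R unfolding removal_within_def a'_def by auto
  then have a': "a' \<in> actions" "Addp M C0 a'" "lt a' R" "val M a = val M a'"
    using removed_add a(3) unfolding a'_def by auto
  have a_action: "a \<in> actions" using Addp_action a by blast
  have a'_event: "a' \<in> E" using a'(1) by blast
  consider (same) "a = a'" | (later) "lt a' a" | (earlier) "lt a a'"
    using prec_linear_on_actions a' a_action by blast
  then show ?thesis
  proof cases
    case same
    then show ?thesis using R_rem unfolding a'_def by blast
  next
    case later
    then obtain R' where "R' \<in> E" "Remp M C1 R'" "gam M R' = a'" "lt R' a"
      using earlier_add_removed[OF a'_event a(1) a'(2) a(2) a'(4)[symmetric]] by blast
    then have "lt R a" using removal_unique R_rem a'_def by blast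
    then show ?thesis using a(1,4) R_rem prec_trans prec_irrefl by blast
  next
    case earlier
    then obtain r where "r \<in> E" "Remp M C1 r" "gam M r = a" "lt r a'"
      using earlier_add_removed[OF a(1) a'_event a(2) a'(2) a'(4)] by blast
    then show ?thesis using a' R_rem prec_trans by blast
  qed
qed

lemma removal_lin_before:
  assumes a: "a \<in> E" "Addp M C0 a" and b: "b \<in> E" "Opp M C0 b"
    and val: "val M a = val M b" and ab: "lin a b"
  shows "\<exists>r\<in>E. Remp M C1 r \<and> gam M r = a \<and> lin r b"
proof -
  have a_action: "a \<in> actions" using Addp_action a by blast
  consider (action) "action M b"
    | (unwitnessed) "\<not> action M b" "isCnt M b \<and> chi M b = C0" "\<nexists>R. removal_within b R"
    | (witnessed) "\<not> action M b" "isCnt M b \<and> chi M b = C0" "\<exists>R. removal_within b R"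
    using Opp_non_action b by blast
  then show ?thesis
  proof cases
    case action
    then have "lt a b" using ab a_action b(1) lin_actions_iff by blast
    then obtain R where "R \<in> E" "Remp M C1 R" "gam M R = a" "lt R b"
      using A2_rule a b val action bgn_fin_of_action by force
    then show ?thesis using action b(1) Remp_action lin_actions_iff by blast
  next
    case unwitnessed
    then have key: "key b = (bgn M b, 0)" by (simp add: key_def)
    then have "lt a (bgn M b)" using ab a_action lin_action_left_iff by auto
    then have "lt a b" using prec_iff_fin_bgn[OF a(1) b(1)] a_action bgn_fin_of_action by auto
    then obtain R where R: "R \<in> E" "Remp M C1 R" "gam M R = a" "lt R (fin M b)"
      using A2_rule a b val by metis
    then have "lt R (bgn M b)"
      using unwitnessed(3) \<open>lt a (bgn M b)\<close> val unfolding removal_within_def by auto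
    then show ?thesis using R key Remp_action lin_action_left_iff by auto
  next
    case witnessed
    define R where "R = (SOME R. removal_within b R)"
    have R: "removal_within b R" unfolding R_def using witnessed(3) by (rule someI_ex)
    then have key: "key b = (R, 2)" using witnessed by (simp add: key_def R_def)
    have R_action: "R \<in> actions" "Remp M C1 R" using R Remp_action unfolding removal_within_def by auto
    have "a \<noteq> R" using a R_action ops_disjoint unfolding Addp_def Remp_def by blast
    then have "lt a R" using ab key a_action lin_action_left_iff by auto
    then obtain r where "r \<in> E" "Remp M C1 r" "gam M r = a" "r = R \<or> lt r R"
      using add_before_removal_within_removed R a val by blast
    then show ?thesis using key Remp_action lin_action_left_iff by auto
  qed
qed

lemma FS2_lin: "FS2 M lin"
  unfolding FS2_def Let_def
proof (intro ballI impI)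
  fix a b assume "a \<in> E" "b \<in> E" "lin a b" "Addp M C0 a" "Opp M C0 b" "val M a = val M b"
  then obtain r where "r \<in> E" "Remp M C1 r" "gam M r = a" "lin r b"
    using removal_lin_before by blast
  then show "\<exists>r\<in>E. lin a r \<and> lin r b \<and> Remp M C1 r \<and> a = gam M r"
    using lin_removed_add by blast
qed

end

theorem theorem3p2:
  fixes M :: "'e sysexec"
  assumes "system_execution M" and "A0 M" and "A1 M" and "A2 M"
  shows "\<exists>lt0. (\<forall>x\<in>events M. \<forall>y\<in>events M. prec M x y \<longrightarrow> lt0 x y)
               \<and> FS0 M lt0 \<and> FS1 M lt0 \<and> FS2 M lt0"
proof -
  obtain tiebreak where "strict_linear_on (events M) tiebreak"
    using strict_linear_on_exists by blast
  with assms interpret lazy_set_execution M tiebreak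
    by unfold_locales
  show ?thesis
    using lin_extends_prec FS0_lin FS1_lin FS2_lin by blast
qed

end
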